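(* Every core network $\mathcal G$ with multiple input nodes $\iota_1,\dots,\iota_n$ ($n\ge2$) and output node $o$ supports input counterweight homeostasis: $\det\langle H\rangle$ is a multiple of an irreducible polynomial that is homogeneous of degree $1$ in the variables $f_{\iota_1,\mathcal I},\dots,f_{\iota_n,\mathcal I}$ (the determinant of the input counterweight homeostasis block).
   Context: A core network is a directed graph with input nodes $\iota_1,\dots,\iota_n$ and output node $o$ in which every node is upstream from $o$ and downstream from at least one input node (node $b$ is downstream from $a$ if there is a directed path from $a$ to $b$). An admissible system has one real variable per node, $\dot x_{\iota_m}=f_{\iota_m}(X,\mathcal I)$ for inputs and $\dot x_j=f_j(X)$ otherwise, with $f_{j,x_\ell}=\partial f_j/\partial x_\ell\equiv0$ unless there is an arrow $\ell\to j$ (every node self-coupled), and $f_{\iota_m,\mathcal I}\neq0$. The entries $f_{j,x_\ell}$ and $f_{\iota_m,\mathcal I}$ are regarded as independent indeterminates. The generalized homeostasis matrix $\langle H\rangle$ is the Jacobian $(f_{j,x_\ell})$ over all nodes (output last) with its last column replaced by the column with entry $-f_{\iota_m,\mathcal I}$ in row $\iota_m$ and $0$ elsewhere. By Frobenius–König theory there are permutation matrices $P,Q$ with $P\langle H\rangle Q$ block upper triangular with square fully indecomposable diagonal blocks (irreducible homeostasis blocks); the block containing the entries $f_{\iota_m,\mathcal I}$ is the input counterweight block. *)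

theory Defs
  imports "HOL-Library.Poly_Mapping" "HOL-Computational_Algebra.Factorial_Ring"
          "Jordan_Normal_Form.Determinant"
begin

text \<open>Indeterminates of the generalized homeostasis matrix:
  \<open>Fx j l\<close> stands for the partial derivative f_{j,x_l}, and
  \<open>FI m\<close> stands for f_{m,I} (m an input node).\<close>
datatype hvar = Fx nat nat | FI nat

type_synonym hpoly = "(hvar \<Rightarrow>\<^sub>0 nat) \<Rightarrow>\<^sub>0 real"

definition indet :: "hvar \<Rightarrow> hpoly" where
  "indet v = Poly_Mapping.single (Poly_Mapping.single v 1) 1"

text \<open>A network on nodes 0..<N, arrows E (a pair (l,j) is the arrow l -> j),
  input node set Inp and output node out is a core network.\<close>
definition core_network :: "nat \<Rightarrow> (nat \<times> nat) set \<Rightarrow> nat set \<Rightarrow> nat \<Rightarrow> bool" where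
  "core_network N E Inp out \<longleftrightarrow>
     E \<subseteq> {0..<N} \<times> {0..<N} \<and> Inp \<subseteq> {0..<N} \<and> out < N \<and> out \<notin> Inp \<and>
     (\<forall>j<N. (j, out) \<in> E\<^sup>* \<and> (\<exists>i\<in>Inp. (i, j) \<in> E\<^sup>*))"

text \<open>Generalized homeostasis matrix: the Jacobian (entry (j,l) is f_{j,x_l}, a
  free indeterminate when there is an arrow l -> j or l = j (self-coupling),
  zero otherwise), with the output column replaced by the column having
  entry -f_{m,I} in each input row m and 0 elsewhere.\<close>
definition gen_homeo_matrix :: "nat \<Rightarrow> (nat \<times> nat) set \<Rightarrow> nat set \<Rightarrow> nat \<Rightarrow> hpoly mat" where
  "gen_homeo_matrix N E Inp out = mat N N (\<lambda>(j, l).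
     if l = out then (if j \<in> Inp then - indet (FI j) else 0)
     else if (l, j) \<in> E \<or> l = j then indet (Fx j l) else 0)"

definition input_degree :: "nat set \<Rightarrow> (hvar \<Rightarrow>\<^sub>0 nat) \<Rightarrow> nat" where
  "input_degree Inp m = (\<Sum>i\<in>Inp. Poly_Mapping.lookup m (FI i))"

definition homogeneous_deg1_in_inputs :: "nat set \<Rightarrow> hpoly \<Rightarrow> bool" where
  "homogeneous_deg1_in_inputs Inp p \<longleftrightarrow>
     p \<noteq> 0 \<and> (\<forall>m\<in>Poly_Mapping.keys p. input_degree Inp m = 1)"

end

theory Submission
  imports Defs "HOL-Library.Countable" "HOL-Library.Transitive_Closure_Table"
begin

(* In the Leibniz expansion of det <H> every term contains exactly one entry of the output
   column, hence exactly one variable f_{i,I}. Distinct permutations yield distinct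
   monomials, so nothing cancels, and the permutation that runs backwards along a simple
   path from an input node to o (and fixes all other nodes) contributes a nonzero term.
   Thus det <H> is a nonzero polynomial, homogeneous of degree 1 in the input variables.
   Any such polynomial has an irreducible factor of the same kind: grading by input degree
   is multiplicative, so in a factorisation one factor has input degree 0 and the other is
   again homogeneous of degree 1, and induction on the total degree concludes. *)

(* Poly_Mapping makes polynomials an integral domain only over linearly ordered
   indeterminates; any linear order on hvar will do. *)
instance hvar :: countable
  by countable_datatype

instantiation hvar :: linorder
begin

definition less_eq_hvar :: "hvar \<Rightarrow> hvar \<Rightarrow> bool" where
  "less_eq_hvar x y \<longleftrightarrow> to_nat x \<le> to_nat y"

definition less_hvar :: "hvar \<Rightarrow> hvar \<Rightarrow> bool" where
  "less_hvar x y \<longleftrightarrow> to_nat x < to_nat y"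

instance
  by standard (auto simp: less_eq_hvar_def less_hvar_def)

end

section \<open>Weighted gradings of polynomials\<close>

(* The coefficient of t^k in graded_poly w p is the weight-k part of p; for additive w
   the map is multiplicative, so weights of products add up like degrees. *)
definition graded_poly ::
    "('m \<Rightarrow> nat) \<Rightarrow> ('m \<Rightarrow>\<^sub>0 'a::comm_monoid_add) \<Rightarrow> ('m \<Rightarrow>\<^sub>0 'a) poly" where
  "graded_poly w p =
     (\<Sum>m\<in>Poly_Mapping.keys p. monom (Poly_Mapping.single m (Poly_Mapping.lookup p m)) (w m))"

definition weighted_homogeneous :: "('m \<Rightarrow> nat) \<Rightarrow> nat \<Rightarrow> ('m \<Rightarrow>\<^sub>0 'a::zero) \<Rightarrow> bool" where
  "weighted_homogeneous w k p \<longleftrightarrow> (\<forall>m\<in>Poly_Mapping.keys p. w m = k)"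

lemma sum_single_lookup:
  "(\<Sum>m\<in>Poly_Mapping.keys p. Poly_Mapping.single m (Poly_Mapping.lookup p m)) = p"
  by (rule poly_mapping_eqI)
    (auto simp: lookup_sum lookup_single when_def in_keys_iff sum.If_cases)

lemma graded_poly_superset:
  assumes "finite S" "Poly_Mapping.keys p \<subseteq> S"
  shows "graded_poly w p = (\<Sum>m\<in>S. monom (Poly_Mapping.single m (Poly_Mapping.lookup p m)) (w m))"
  unfolding graded_poly_def
  by (rule sum.mono_neutral_left) (use assms in \<open>auto simp: in_keys_iff\<close>)

lemma graded_poly_0 [simp]: "graded_poly w 0 = 0"
  by (simp add: graded_poly_def)

lemma graded_poly_single [simp]:
  "graded_poly w (Poly_Mapping.single m c) = monom (Poly_Mapping.single m c) (w m)"
  by (cases "c = 0") (auto simp: graded_poly_def)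

lemma graded_poly_add: "graded_poly w (p + q) = graded_poly w p + graded_poly w q"
proof -
  let ?S = "Poly_Mapping.keys p \<union> Poly_Mapping.keys q"
  have S: "finite ?S" "Poly_Mapping.keys (p + q) \<subseteq> ?S"
    by (simp_all add: keys_add)
  show ?thesis
    by (simp add: graded_poly_superset[OF S] graded_poly_superset[OF S(1)]
        lookup_add single_add add_monom[symmetric] sum.distrib)
qed

lemma graded_poly_1:
  assumes "w 0 = 0"
  shows "graded_poly w 1 = (1 :: ('m::comm_monoid_add \<Rightarrow>\<^sub>0 'a::comm_semiring_1) poly)"
proof -
  have "graded_poly w (Poly_Mapping.single 0 1) = monom (Poly_Mapping.single 0 (1::'a)) (w (0::'m))"
    by (rule graded_poly_single)
  then show ?thesis
    using assms by (simp add: monom_0 one_pCons)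
qed

lemma graded_poly_sum: "graded_poly w (sum f A) = (\<Sum>a\<in>A. graded_poly w (f a))"
  by (induction A rule: infinite_finite_induct) (auto simp: graded_poly_add)

lemma graded_poly_mult:
  fixes p q :: "'m::comm_monoid_add \<Rightarrow>\<^sub>0 'a::comm_semiring_1"
  assumes additive: "\<And>a b. w (a + b) = w a + w b"
  shows "graded_poly w (p * q) = graded_poly w p * graded_poly w q"
proof -
  let ?P = "Poly_Mapping.keys p" and ?Q = "Poly_Mapping.keys q"
  have "p * q = (\<Sum>a\<in>?P. Poly_Mapping.single a (Poly_Mapping.lookup p a))
      * (\<Sum>b\<in>?Q. Poly_Mapping.single b (Poly_Mapping.lookup q b))"
    by (simp only: sum_single_lookup)
  also have "\<dots> = (\<Sum>a\<in>?P. \<Sum>b\<in>?Q.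
      Poly_Mapping.single (a + b) (Poly_Mapping.lookup p a * Poly_Mapping.lookup q b))"
    unfolding sum_distrib_right by (simp add: sum_distrib_left mult_single)
  finally have pq: "p * q = \<dots>" .
  have "graded_poly w (p * q) = (\<Sum>a\<in>?P. \<Sum>b\<in>?Q.
      monom (Poly_Mapping.single a (Poly_Mapping.lookup p a)) (w a)
      * monom (Poly_Mapping.single b (Poly_Mapping.lookup q b)) (w b))"
    unfolding pq by (simp add: graded_poly_sum additive mult_monom mult_single)
  also have "\<dots> = graded_poly w p * graded_poly w q"
    unfolding graded_poly_def sum_distrib_right by (simp add: sum_distrib_left)
  finally show ?thesis .
qed

lemma poly_graded_poly_1 [simp]:
  fixes p :: "'m::comm_monoid_add \<Rightarrow>\<^sub>0 'a::comm_semiring_1"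
  shows "poly (graded_poly w p) 1 = p"
  by (simp add: graded_poly_def poly_sum poly_monom sum_single_lookup)

lemma graded_poly_eq_0_iff [simp]:
  fixes p :: "'m::comm_monoid_add \<Rightarrow>\<^sub>0 'a::comm_semiring_1"
  shows "graded_poly w p = 0 \<longleftrightarrow> p = 0"
  by (metis poly_graded_poly_1 poly_0 graded_poly_0)

lemma lookup_coeff_graded_poly:
  "Poly_Mapping.lookup (coeff (graded_poly w p) k) m = (if w m = k then Poly_Mapping.lookup p m else 0)"
  by (cases "m \<in> Poly_Mapping.keys p")
    (auto simp: graded_poly_def coeff_sum lookup_sum lookup_single when_def in_keys_iff
      if_distrib sum.If_cases cong: if_cong)

lemma weighted_homogeneous_iff_graded_poly:
  fixes p :: "'m::comm_monoid_add \<Rightarrow>\<^sub>0 'a::comm_semiring_1"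
  shows "weighted_homogeneous w k p \<longleftrightarrow> graded_poly w p = monom p k"
proof
  assume "weighted_homogeneous w k p"
  then show "graded_poly w p = monom p k"
    by (intro poly_eqI poly_mapping_eqI)
      (auto simp: lookup_coeff_graded_poly weighted_homogeneous_def in_keys_iff)
next
  assume graded: "graded_poly w p = monom p k"
  have "w m = k" if "m \<in> Poly_Mapping.keys p" for m
    using lookup_coeff_graded_poly[of w p "w m" m] that
    by (auto simp: graded in_keys_iff split: if_splits)
  then show "weighted_homogeneous w k p"
    by (simp add: weighted_homogeneous_def)
qed

lemma graded_poly_degree_0:
  fixes p :: "'m::comm_monoid_add \<Rightarrow>\<^sub>0 'a::comm_semiring_1"
  assumes "degree (graded_poly w p) = 0"
  shows "graded_poly w p = [:p:]"
proof -
  have const: "graded_poly w p = [:coeff (graded_poly w p) 0:]"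
    using assms by (metis degree_0_id)
  then have "p = coeff (graded_poly w p) 0"
    by (metis poly_graded_poly_1 poly_pCons poly_0 mult_zero_right add_0_right)
  then show ?thesis
    using const by simp
qed

context
  fixes w :: "'m::{ordered_cancel_comm_monoid_add, linorder} \<Rightarrow> nat"
  assumes additive: "\<And>a b. w (a + b) = w a + w b"
begin

lemma weighted_homogeneous_not_unit:
  fixes p :: "'m \<Rightarrow>\<^sub>0 'a::idom"
  assumes "p \<noteq> 0" "weighted_homogeneous w k p" "k > 0"
  shows "\<not> p dvd 1"
proof
  assume "p dvd 1"
  then obtain b where "p * b = 1"
    by (metis dvdE)
  then have "graded_poly w p * graded_poly w b = 1"
    using additive[of 0 0] by (simp add: graded_poly_mult[symmetric] additive graded_poly_1)
  then have "degree (graded_poly w p) = 0"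
    by (metis degree_1 degree_mult_eq add_is_0 one_neq_zero mult_zero_left mult_zero_right)
  then show False
    using assms by (simp add: weighted_homogeneous_iff_graded_poly degree_monom_eq)
qed

lemma weighted_homogeneous_1_factor:
  fixes c d :: "'m \<Rightarrow>\<^sub>0 'a::idom"
  assumes "c * d \<noteq> 0" "weighted_homogeneous w 1 (c * d)"
  shows "weighted_homogeneous w 1 c \<or> weighted_homogeneous w 1 d"
proof -
  have cofactor: "weighted_homogeneous w 1 y"
    if "degree (graded_poly w x) = 0" "x * y \<noteq> 0" "weighted_homogeneous w 1 (x * y)"
    for x y :: "'m \<Rightarrow>\<^sub>0 'a"
  proof -
    have "smult x (graded_poly w y) = monom (x * y) 1"
      using that by (simp add: graded_poly_mult additive graded_poly_degree_0
          weighted_homogeneous_iff_graded_poly)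
    then have "coeff (graded_poly w y) k = 0" if "k \<noteq> 1" for k
      using \<open>x * y \<noteq> 0\<close> that by (metis coeff_smult coeff_monom mult_eq_0_iff)
    then have "graded_poly w y = monom (coeff (graded_poly w y) 1) 1"
      by (intro poly_eqI) (auto simp: coeff_monom)
    moreover from this have "coeff (graded_poly w y) 1 = y"
      by (metis poly_graded_poly_1 poly_monom power_one mult.right_neutral)
    ultimately show ?thesis
      by (simp add: weighted_homogeneous_iff_graded_poly)
  qed
  have "graded_poly w c * graded_poly w d = monom (c * d) 1"
    using assms by (simp add: graded_poly_mult[symmetric] additive
        weighted_homogeneous_iff_graded_poly)
  then have "degree (graded_poly w c) + degree (graded_poly w d) = 1"
    using assms by (metis degree_mult_eq degree_monom_eq graded_poly_eq_0_iff mult_zero_left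
        mult_zero_right)
  then consider "degree (graded_poly w c) = 0" | "degree (graded_poly w d) = 0"
    by linarith
  then show ?thesis
    using cofactor[of c d] cofactor[of d c] assms by cases (simp_all add: mult.commute)
qed

lemma weighted_homogeneous_1_reducible:
  fixes p :: "'m \<Rightarrow>\<^sub>0 'a::idom"
  assumes "p \<noteq> 0" "weighted_homogeneous w 1 p" "\<not> irreducible p"
  obtains x y where "p = x * y" "\<not> x dvd 1" "weighted_homogeneous w 1 y"
proof -
  have "\<not> p dvd 1"
    using weighted_homogeneous_not_unit[of p 1] assms by simp
  then obtain c d where cd: "p = c * d" "\<not> c dvd 1" "\<not> d dvd 1"
    using assms(1,3) by (auto simp: irreducible_def)
  have "weighted_homogeneous w 1 c \<or> weighted_homogeneous w 1 d"
    using weighted_homogeneous_1_factor[of c d] assms cd(1) by simp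
  then show thesis
  proof
    assume "weighted_homogeneous w 1 c"
    then show thesis
      using that[of d c] cd by (simp add: mult.commute)
  next
    assume "weighted_homogeneous w 1 d"
    then show thesis
      using that[of c d] cd by simp
  qed
qed

end

definition monomial_degree :: "('v \<Rightarrow>\<^sub>0 nat) \<Rightarrow> nat" where
  "monomial_degree m = sum (Poly_Mapping.lookup m) (Poly_Mapping.keys m)"

lemma monomial_degree_superset:
  "finite S \<Longrightarrow> Poly_Mapping.keys m \<subseteq> S \<Longrightarrow>
    monomial_degree m = sum (Poly_Mapping.lookup m) S"
  unfolding monomial_degree_def by (rule sum.mono_neutral_left) (auto simp: in_keys_iff)

lemma monomial_degree_add: "monomial_degree (a + b) = monomial_degree a + monomial_degree b"
proof -
  let ?S = "Poly_Mapping.keys a \<union> Poly_Mapping.keys b"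
  have S: "finite ?S" "Poly_Mapping.keys (a + b) \<subseteq> ?S"
    by (simp_all add: keys_add)
  show ?thesis
    by (simp add: monomial_degree_superset[OF S] monomial_degree_superset[OF S(1)]
        lookup_add sum.distrib)
qed

lemma monomial_degree_eq_0_iff: "monomial_degree m = 0 \<longleftrightarrow> m = 0"
  by (auto simp: monomial_degree_def in_keys_iff intro: poly_mapping_eqI)

lemma unit_if_graded_poly_degree_0:
  fixes c :: "('v \<Rightarrow>\<^sub>0 nat) \<Rightarrow>\<^sub>0 'a::field"
  assumes "c \<noteq> 0" "degree (graded_poly monomial_degree c) = 0"
  shows "c dvd 1"
proof -
  have "Poly_Mapping.lookup c m = 0" if "m \<noteq> 0" for m
  proof -
    have "coeff [:c:] (monomial_degree m) = 0"
      using that by (cases "monomial_degree m") (auto simp: monomial_degree_eq_0_iff)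
    then show ?thesis
      using lookup_coeff_graded_poly[of monomial_degree c "monomial_degree m" m]
      by (simp add: graded_poly_degree_0[OF assms(2)])
  qed
  then have c: "c = Poly_Mapping.single 0 (Poly_Mapping.lookup c 0)"
    by (intro poly_mapping_eqI) (auto simp: lookup_single when_def)
  with assms(1) have "Poly_Mapping.lookup c 0 \<noteq> 0"
    by (metis single_zero)
  then have "c * Poly_Mapping.single 0 (inverse (Poly_Mapping.lookup c 0)) = 1"
    by (subst c) (simp add: mult_single)
  then show ?thesis
    by (metis dvdI)
qed

lemma weighted_homogeneous_irreducible_factor:
  fixes p :: "('v::linorder \<Rightarrow>\<^sub>0 nat) \<Rightarrow>\<^sub>0 'a::field"
  assumes additive: "\<And>a b. w (a + b) = w a + w b"
    and "p \<noteq> 0" "weighted_homogeneous w 1 p"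
  shows "\<exists>q. irreducible q \<and> weighted_homogeneous w 1 q \<and> q dvd p"
  using assms(2,3)
proof (induction "degree (graded_poly monomial_degree p)" arbitrary: p rule: less_induct)
  case less
  show ?case
  proof (cases "irreducible p")
    case True
    then show ?thesis
      using less.prems dvd_refl by blast
  next
    case False
    then obtain x y where p: "p = x * y" and "\<not> x dvd 1" and y: "weighted_homogeneous w 1 y"
      using weighted_homogeneous_1_reducible[OF additive] less.prems by blast
    have "x \<noteq> 0" "y \<noteq> 0"
      using p less.prems(1) by auto
    then have "degree (graded_poly monomial_degree x) > 0"
      using \<open>\<not> x dvd 1\<close> unit_if_graded_poly_degree_0 by blast
    moreover have "degree (graded_poly monomial_degree p)
        = degree (graded_poly monomial_degree x) + degree (graded_poly monomial_degree y)"
      using \<open>x \<noteq> 0\<close> \<open>y \<noteq> 0\<close>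
      by (simp add: p graded_poly_mult monomial_degree_add degree_mult_eq)
    ultimately have "degree (graded_poly monomial_degree y) < degree (graded_poly monomial_degree p)"
      by linarith
    from less.hyps[OF this \<open>y \<noteq> 0\<close> y] obtain q
      where "irreducible q" "weighted_homogeneous w 1 q" "q dvd y"
      by blast
    then show ?thesis
      unfolding p by (blast intro: dvd_mult)
  qed
qed

section \<open>Determinants of matrices of scaled indeterminates\<close>

definition indet_mat ::
    "nat \<Rightarrow> (nat \<Rightarrow> nat \<Rightarrow> 'v) \<Rightarrow> (nat \<Rightarrow> nat \<Rightarrow> 'a) \<Rightarrow> (('v \<Rightarrow>\<^sub>0 nat) \<Rightarrow>\<^sub>0 'a::zero) mat" where
  "indet_mat n x c = mat n n (\<lambda>(i, j). Poly_Mapping.single (Poly_Mapping.single (x i j) 1) (c i j))"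

definition transversal_monomial ::
    "nat \<Rightarrow> (nat \<Rightarrow> nat \<Rightarrow> 'v) \<Rightarrow> (nat \<Rightarrow> nat) \<Rightarrow> 'v \<Rightarrow>\<^sub>0 nat" where
  "transversal_monomial n x p = (\<Sum>i=0..<n. Poly_Mapping.single (x i (p i)) 1)"

lemma prod_single:
  "(\<Prod>i\<in>S. Poly_Mapping.single (f i) (g i)) =
     Poly_Mapping.single (\<Sum>i\<in>S. f i) (\<Prod>i\<in>S. g i :: 'a::comm_semiring_1)"
  by (induction S rule: infinite_finite_induct) (auto simp: mult_single)

lemma det_indet_mat:
  "det (indet_mat n x c) =
     (\<Sum>p\<in>{p. p permutes {0..<n}}.
        Poly_Mapping.single (transversal_monomial n x p) (signof p * (\<Prod>i=0..<n. c i (p i))))"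
proof -
  have carrier: "indet_mat n x c \<in> carrier_mat n n"
    by (simp add: indet_mat_def)
  show ?thesis
    unfolding det_def'[OF carrier]
  proof (rule sum.cong[OF refl])
    fix p assume "p \<in> {p. p permutes {0..<n}}"
    then have "i < n \<Longrightarrow> p i < n" for i
      by (auto dest: permutes_in_image)
    then have "(\<Prod>i=0..<n. indet_mat n x c $$ (i, p i)) =
        Poly_Mapping.single (transversal_monomial n x p) (\<Prod>i=0..<n. c i (p i))"
      by (simp add: indet_mat_def transversal_monomial_def prod_single[symmetric])
    then show "signof p * (\<Prod>i=0..<n. indet_mat n x c $$ (i, p i)) =
        Poly_Mapping.single (transversal_monomial n x p) (signof p * (\<Prod>i=0..<n. c i (p i)))"
      by (simp add: single_of_int[symmetric] mult_single del: single_of_int)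
  qed
qed

lemma lookup_transversal_monomial:
  "Poly_Mapping.lookup (transversal_monomial n x p) v = (\<Sum>i=0..<n. 1 when x i (p i) = v)"
  by (simp add: transversal_monomial_def lookup_sum lookup_single)

lemma transversal_monomial_inj:
  assumes inj: "inj_on (case_prod x) ({0..<n} \<times> {0..<n})"
    and p: "p permutes {0..<n}" and q: "q permutes {0..<n}"
    and eq: "transversal_monomial n x p = transversal_monomial n x q"
  shows "p = q"
proof
  fix j
  show "p j = q j"
  proof (cases "j < n")
    case True
    have "Poly_Mapping.lookup (transversal_monomial n x q) (x j (p j)) \<noteq> 0"
      unfolding eq[symmetric] lookup_transversal_monomial using True by (auto simp: when_def)
    then obtain i where "i < n" "x i (q i) = x j (p j)"
      by (auto simp: lookup_transversal_monomial when_def split: if_splits)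
    moreover have "q i < n" "p j < n"
      using \<open>i < n\<close> True p q by (auto dest: permutes_in_image)
    ultimately have "(i, q i) = (j, p j)"
      using True inj_onD[OF inj, of "(i, q i)" "(j, p j)"] by auto
    then show ?thesis
      by auto
  next
    case False
    then show ?thesis
      using p q by (simp add: permutes_def)
  qed
qed

lemma lookup_det_indet_mat:
  assumes "inj_on (case_prod x) ({0..<n} \<times> {0..<n})" and "\<sigma> permutes {0..<n}"
  shows "Poly_Mapping.lookup (det (indet_mat n x c)) (transversal_monomial n x \<sigma>) =
    signof \<sigma> * (\<Prod>i=0..<n. c i (\<sigma> i))"
proof -
  have "(transversal_monomial n x p = transversal_monomial n x \<sigma>) = (p = \<sigma>)"
    if "p permutes {0..<n}" for p
    using transversal_monomial_inj[OF assms(1) that assms(2)] by blast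
  then have "Poly_Mapping.lookup (det (indet_mat n x c)) (transversal_monomial n x \<sigma>) =
      (\<Sum>p\<in>{p. p permutes {0..<n}}. if p = \<sigma> then signof p * (\<Prod>i=0..<n. c i (p i)) else 0)"
    unfolding det_indet_mat lookup_sum lookup_single by (intro sum.cong) (simp_all add: when_def)
  also have "\<dots> = signof \<sigma> * (\<Prod>i=0..<n. c i (\<sigma> i))"
    using assms(2) by (simp add: finite_permutations)
  finally show ?thesis .
qed

lemma keys_det_indet_mat:
  assumes "m \<in> Poly_Mapping.keys (det (indet_mat n x c))"
  obtains p where "p permutes {0..<n}" "\<forall>i<n. c i (p i) \<noteq> 0" "m = transversal_monomial n x p"
proof -
  have "(\<Sum>p\<in>{p. p permutes {0..<n}}.
      signof p * (\<Prod>i=0..<n. c i (p i)) when transversal_monomial n x p = m) \<noteq> 0"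
    using assms by (simp add: in_keys_iff det_indet_mat lookup_sum lookup_single)
  then obtain p where p: "p permutes {0..<n}" and m: "m = transversal_monomial n x p"
    and nonzero: "signof p * (\<Prod>i=0..<n. c i (p i)) \<noteq> 0"
    by (auto elim: sum.not_neutral_contains_not_neutral simp: when_def split: if_splits)
  have "c i (p i) \<noteq> 0" if "i < n" for i
  proof
    assume "c i (p i) = 0"
    then have "(\<Prod>i=0..<n. c i (p i)) = 0"
      using that by (intro prod_zero) auto
    then show False
      using nonzero by simp
  qed
  then show thesis
    using that p m by blast
qed

lemma det_indet_mat_neq_0:
  fixes c :: "nat \<Rightarrow> nat \<Rightarrow> 'a::idom"
  assumes "inj_on (case_prod x) ({0..<n} \<times> {0..<n})" and "\<sigma> permutes {0..<n}"
    and "\<forall>i<n. c i (\<sigma> i) \<noteq> 0"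
  shows "det (indet_mat n x c) \<noteq> 0"
proof -
  have "signof \<sigma> * (\<Prod>i=0..<n. c i (\<sigma> i)) \<noteq> 0"
    using assms(3) by (simp add: sign_def)
  then show ?thesis
    using lookup_det_indet_mat[OF assms(1,2), of c] by auto
qed

section \<open>The generalized homeostasis matrix of a core network\<close>

lemma simple_path_predecessor_permutation:
  assumes "rtrancl_path r a vs b" and "distinct (a # vs)"
  shows "\<exists>\<sigma>. \<sigma> permutes set (a # vs) \<and> \<sigma> a = b \<and> (\<forall>v\<in>set vs. r (\<sigma> v) v)"
  using assms
proof (induction rule: rtrancl_path.induct)
  case (base a)
  then show ?case
    using permutes_id by fastforce
next
  case (step a y ys b)
  then obtain \<sigma> where \<sigma>: "\<sigma> permutes set (y # ys)" "\<sigma> y = b" "\<forall>v\<in>set ys. r (\<sigma> v) v"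
    by auto
  have a: "a \<notin> set (y # ys)"
    using step.prems by simp
  define \<tau> where "\<tau> = \<sigma> \<circ> Transposition.transpose a y"
  have "\<tau> permutes set (a # y # ys)"
    unfolding \<tau>_def
    by (rule permutes_compose[OF permutes_swap_id permutes_subset[OF \<sigma>(1)]]) auto
  moreover have "\<tau> a = b" "\<tau> y = a"
    using \<sigma> a permutes_not_in by (fastforce simp: \<tau>_def)+
  moreover have "\<tau> v = \<sigma> v" if "v \<in> set ys" for v
  proof -
    have "v \<noteq> a" "v \<noteq> y"
      using that step.prems by auto
    then show ?thesis
      by (simp add: \<tau>_def)
  qed
  ultimately show ?case
    using \<sigma>(3) \<open>r a y\<close> by (intro exI[of _ \<tau>]) auto
qed

definition homeo_var :: "nat \<Rightarrow> nat \<Rightarrow> nat \<Rightarrow> hvar" where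
  "homeo_var out j l = (if l = out then FI j else Fx j l)"

definition homeo_coeff ::
    "(nat \<times> nat) set \<Rightarrow> nat set \<Rightarrow> nat \<Rightarrow> nat \<Rightarrow> nat \<Rightarrow> real" where
  "homeo_coeff E Inp out j l =
     (if l = out then (if j \<in> Inp then -1 else 0) else if (l, j) \<in> E \<or> l = j then 1 else 0)"

lemma gen_homeo_matrix_eq_indet_mat:
  "gen_homeo_matrix N E Inp out = indet_mat N (homeo_var out) (homeo_coeff E Inp out)"
  by (rule eq_matI)
    (auto simp: gen_homeo_matrix_def indet_mat_def homeo_var_def homeo_coeff_def indet_def
      single_uminus)

lemma inj_homeo_var: "inj (case_prod (homeo_var out))"
  by (auto simp: inj_def homeo_var_def split: if_splits)

lemma input_degree_add: "input_degree Inp (a + b) = input_degree Inp a + input_degree Inp b"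
  by (simp add: input_degree_def lookup_add sum.distrib)

lemma input_degree_transversal_monomial:
  assumes "finite Inp" and "out < N" and p: "p permutes {0..<N}"
    and nonzero: "\<forall>j<N. homeo_coeff E Inp out j (p j) \<noteq> 0"
  shows "input_degree Inp (transversal_monomial N (homeo_var out) p) = 1"
proof -
  have "out \<in> p ` {0..<N}"
    using permutes_image[OF p] \<open>out < N\<close> by simp
  then obtain j0 where "p j0 = out" "j0 < N"
    by auto
  then have "homeo_coeff E Inp out j0 out \<noteq> 0"
    using nonzero by metis
  then have "j0 \<in> Inp"
    by (simp add: homeo_coeff_def split: if_splits)
  have "p j = out \<longleftrightarrow> j = j0" for j
    using \<open>p j0 = out\<close> permutes_inj[OF p] by (auto dest: injD)
  then have var_eq: "homeo_var out j (p j) = FI i \<longleftrightarrow> j = j0 \<and> i = j0" for i j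
    by (auto simp: homeo_var_def)
  have "Poly_Mapping.lookup (transversal_monomial N (homeo_var out) p) (FI i) = (1 when i = j0)"
    for i
  proof -
    have "Poly_Mapping.lookup (transversal_monomial N (homeo_var out) p) (FI i)
        = (\<Sum>j=0..<N. if j = j0 then (1 when i = j0) else 0)"
      unfolding lookup_transversal_monomial using var_eq by (intro sum.cong) (auto simp: when_def)
    also have "\<dots> = (1 when i = j0)"
      using \<open>j0 < N\<close> by simp
    finally show ?thesis .
  qed
  then show ?thesis
    using \<open>finite Inp\<close> \<open>j0 \<in> Inp\<close> by (simp add: input_degree_def when_def)
qed

lemma homeo_coeff_path_permutation_neq_0:
  assumes "\<sigma> permutes set (m # vs)" "\<sigma> m = out" "m \<in> Inp" "\<forall>v\<in>set vs. (\<sigma> v, v) \<in> E"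
  shows "homeo_coeff E Inp out j (\<sigma> j) \<noteq> 0"
proof -
  consider "j = m" | "j \<in> set vs" "j \<noteq> m" | "j \<notin> set (m # vs)"
    by auto
  then show ?thesis
  proof cases
    case 1
    then show ?thesis
      using assms(2,3) by (simp add: homeo_coeff_def)
  next
    case 2
    then have "\<sigma> j \<noteq> out"
      using assms(1,2) permutes_inj by (metis inj_eq)
    then show ?thesis
      using 2 assms(4) by (simp add: homeo_coeff_def)
  next
    case 3
    have "out \<in> set (m # vs)"
      using permutes_in_image[OF assms(1), of m] assms(2) by simp
    then have "j \<noteq> out"
      using 3 by blast
    moreover have "\<sigma> j = j"
      using permutes_not_in[OF assms(1) 3] .
    ultimately show ?thesis
      by (simp add: homeo_coeff_def)
  qed
qed

lemma core_network_transversal: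
  assumes "core_network N E Inp out" and "m \<in> Inp"
  shows "\<exists>\<sigma>. \<sigma> permutes {0..<N} \<and> (\<forall>j<N. homeo_coeff E Inp out j (\<sigma> j) \<noteq> 0)"
proof -
  have E: "E \<subseteq> {0..<N} \<times> {0..<N}" and "m < N" and "(m, out) \<in> E\<^sup>*"
    using assms by (auto simp: core_network_def)
  then have "(\<lambda>u v. (u, v) \<in> E)\<^sup>*\<^sup>* m out"
    by (simp add: rtranclp_rtrancl_eq)
  then obtain vs0 where "rtrancl_path (\<lambda>u v. (u, v) \<in> E) m vs0 out"
    by (auto simp: rtranclp_eq_rtrancl_path)
  then obtain vs where "rtrancl_path (\<lambda>u v. (u, v) \<in> E) m vs out" and "distinct (m # vs)"
    by (rule rtrancl_path_distinct)
  then obtain \<sigma> where \<sigma>: "\<sigma> permutes set (m # vs)" "\<sigma> m = out" "\<forall>v\<in>set vs. (\<sigma> v, v) \<in> E"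
    using simple_path_predecessor_permutation by fastforce
  have "set (m # vs) \<subseteq> {0..<N}"
    using \<open>m < N\<close> \<sigma>(3) E by auto
  then have "\<sigma> permutes {0..<N}"
    by (rule permutes_subset[OF \<sigma>(1)])
  then show ?thesis
    using homeo_coeff_path_permutation_neq_0[OF \<sigma>(1,2) \<open>m \<in> Inp\<close> \<sigma>(3)] by blast
qed

theorem corollary3p10:
  fixes N out :: nat and E :: "(nat \<times> nat) set" and Inp :: "nat set"
  assumes "core_network N E Inp out"
    and "card Inp \<ge> 2"
  shows "\<exists>p :: hpoly. irreducible p \<and> homogeneous_deg1_in_inputs Inp p \<and>
           p dvd det (gen_homeo_matrix N E Inp out)"
proof -
  have "finite Inp" "out < N"
    using assms(1) finite_subset by (auto simp: core_network_def)
  obtain m where "m \<in> Inp"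
    using assms(2) by fastforce
  then obtain \<sigma> where \<sigma>: "\<sigma> permutes {0..<N}" "\<forall>j<N. homeo_coeff E Inp out j (\<sigma> j) \<noteq> 0"
    using core_network_transversal[OF assms(1)] by blast
  have inj: "inj_on (case_prod (homeo_var out)) ({0..<N} \<times> {0..<N})"
    by (rule inj_on_subset[OF inj_homeo_var]) simp
  let ?D = "det (gen_homeo_matrix N E Inp out)"
  have "?D \<noteq> 0"
    unfolding gen_homeo_matrix_eq_indet_mat using inj \<sigma> by (rule det_indet_mat_neq_0)
  moreover have "weighted_homogeneous (input_degree Inp) 1 ?D"
    unfolding weighted_homogeneous_def gen_homeo_matrix_eq_indet_mat
  proof
    fix mon
    assume "mon \<in> Poly_Mapping.keys (det (indet_mat N (homeo_var out) (homeo_coeff E Inp out)))"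
    then show "input_degree Inp mon = 1"
      by (rule keys_det_indet_mat)
        (simp add: input_degree_transversal_monomial \<open>finite Inp\<close> \<open>out < N\<close>)
  qed
  ultimately obtain q where "irreducible q" "weighted_homogeneous (input_degree Inp) 1 q" "q dvd ?D"
    using weighted_homogeneous_irreducible_factor[OF input_degree_add[of Inp]] by blast
  then show ?thesis
    unfolding homogeneous_deg1_in_inputs_def weighted_homogeneous_def by auto
qed

end
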